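(* Let $(\Omega,\mathcal F,\mathbb P)$ be a probability space carrying a group of measurable bijections $\{\theta_n\}_{n\in\mathbb Z}$ each preserving $\mathbb P$, and let $\{a_n\}_{n\in\mathbb Z}$ be i.i.d. flow-compatible random variables with values in $\{1,2,\dots\}$, with $\mathbb E[a_0]<\infty$ and $\mathbb P[a_0=1]\in(0,1)$. Let $f(n)=n+a_n$ and, for $n\ge 1$, $d_n(0)=\#\{m\in\mathbb Z: f^n(m)=0\}$. Then for all $n\ge 1$, $$\mathbb E^s[d_n(0)]>1\quad\text{and}\quad \mathbb E^e[d_n(0)]<1.$$
   Context: $f^n$ is the $n$-th iterate of $f$. The descendants of $k$ are $D(k)=\{m:\exists\,j\ge 0,\ f^j(m)=k\}$; $k$ is successful if $D(k)$ is infinite and ephemeral otherwise; $\Phi^s,\Phi^e$ are the sets of successful and ephemeral integers. $\mathbb E^s$ and $\mathbb E^e$ denote expectation under the Palm probabilities $\mathbb P[\cdot\mid 0\in\Phi^s]$ and $\mathbb P[\cdot\mid 0\in\Phi^e]$ respectively (both events have positive probability under these assumptions). *)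

theory Defs
  imports "HOL-Probability.Probability"
begin

definition fmap :: "(int \<Rightarrow> 'a \<Rightarrow> int) \<Rightarrow> 'a \<Rightarrow> int \<Rightarrow> int" where
  "fmap a w m = m + a m w"

definition descendants :: "(int \<Rightarrow> 'a \<Rightarrow> int) \<Rightarrow> 'a \<Rightarrow> int \<Rightarrow> int set" where
  "descendants a w k = {m. \<exists>j::nat. (fmap a w ^^ j) m = k}"

definition successful :: "(int \<Rightarrow> 'a \<Rightarrow> int) \<Rightarrow> 'a \<Rightarrow> int \<Rightarrow> bool" where
  "successful a w k \<longleftrightarrow> infinite (descendants a w k)"

definition ephemeral :: "(int \<Rightarrow> 'a \<Rightarrow> int) \<Rightarrow> 'a \<Rightarrow> int \<Rightarrow> bool" where
  "ephemeral a w k \<longleftrightarrow> finite (descendants a w k)"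

definition dcount :: "(int \<Rightarrow> 'a \<Rightarrow> int) \<Rightarrow> nat \<Rightarrow> 'a \<Rightarrow> int \<Rightarrow> ennreal" where
  "dcount a n w k = emeasure (count_space UNIV) {m. (fmap a w ^^ n) m = k}"

text \<open>Expectation under the conditional (Palm) probability P[. | S].\<close>
definition cond_exp_given :: "'a measure \<Rightarrow> 'a set \<Rightarrow> ('a \<Rightarrow> ennreal) \<Rightarrow> ennreal" where
  "cond_exp_given M S X = (\<integral>\<^sup>+ w\<in>S. X w \<partial>M) / emeasure M S"

end

(*
  Mass transport: for an event Q that moves covariantly with the shift, counting the pairs
  (m, k) with f^n(m) = k in two ways gives E[d_n(0); Q(0)] = P[Q(f^n(0))]. Since
  successfulness is inherited by ancestors, applying this to Q = successful and
  Q = ephemeral yields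
    E[d_n(0); 0 successful] = P[0 successful] + delta_n,
    E[d_n(0); 0 ephemeral]  = P[0 ephemeral]  - delta_n,
  with delta_n = P[0 ephemeral, f^n(0) successful] nondecreasing in n; so it suffices
  that delta_1 > 0. With positive probability all jumps from [0, L) equal 1 while no
  jump from a negative site lands on 0 or overshoots L: a union bound controls the
  far left (this is where E[a_0] < infinity enters) and independence multiplies the
  probabilities of the remaining sites. On that event 0 is ephemeral and f^L(0) = L is successful, so
  delta_L > 0, and a second mass transport along the first switch from ephemeral to
  successful on the orbit of 0 gives delta_1 > 0.
*)
theory Submission
  imports Defs
begin

section \<open>The deterministic forest of f\<close>

lemma funpow_fmap_Suc: "(fmap a w ^^ Suc j) m = (fmap a w ^^ j) m + a ((fmap a w ^^ j) m) w"
  by (simp add: fmap_def)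

lemma funpow_fmap_ge:
  assumes "\<And>m. 1 \<le> a m w"
  shows "m + int j \<le> (fmap a w ^^ j) m"
proof (induction j)
  case (Suc j)
  then show ?case using assms[of "(fmap a w ^^ j) m"] funpow_fmap_Suc[of j a w m] by linarith
qed simp

lemma descendants_le:
  assumes "\<And>m. 1 \<le> a m w" and "m \<in> descendants a w x"
  shows "m \<le> x"
proof -
  obtain j where "(fmap a w ^^ j) m = x" using assms(2) by (auto simp: descendants_def)
  then show ?thesis using funpow_fmap_ge[where a=a, OF assms(1), of m j] by simp
qed

lemma self_in_descendants: "x \<in> descendants a w x"
  unfolding descendants_def by (auto intro: exI[of _ 0])

lemma finite_iff_bdd_below_int:
  fixes S :: "int set"
  assumes "S \<subseteq> {..x}"
  shows "finite S \<longleftrightarrow> bdd_below S"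
proof
  assume "bdd_below S"
  then obtain l where "\<And>s. s \<in> S \<Longrightarrow> l \<le> s" by (auto simp: bdd_below_def)
  then have "S \<subseteq> {l..x}" using assms by auto
  then show "finite S" using finite_subset by blast
qed (rule bdd_below_finite)

lemma successful_iff_unbounded:
  assumes "\<And>m. 1 \<le> a m w"
  shows "successful a w x \<longleftrightarrow> (\<forall>N. \<exists>m\<in>descendants a w x. m < N)"
proof -
  have "descendants a w x \<subseteq> {..x}" using descendants_le[where a=a, OF assms] by blast
  then show ?thesis
    unfolding successful_def finite_iff_bdd_below_int[OF \<open>_ \<subseteq> _\<close>] bdd_below_def
    by (auto simp: not_le)
qed

lemma ephemeral_iff_not_successful: "ephemeral a w x \<longleftrightarrow> \<not> successful a w x"
  by (simp add: ephemeral_def successful_def)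

lemma descendants_funpow_mono: "descendants a w x \<subseteq> descendants a w ((fmap a w ^^ k) x)"
proof
  fix m assume "m \<in> descendants a w x"
  then obtain j where "(fmap a w ^^ j) m = x" by (auto simp: descendants_def)
  then have "(fmap a w ^^ (k + j)) m = (fmap a w ^^ k) x" by (simp add: funpow_add)
  then show "m \<in> descendants a w ((fmap a w ^^ k) x)" unfolding descendants_def by blast
qed

lemma successful_funpow: "successful a w x \<Longrightarrow> successful a w ((fmap a w ^^ k) x)"
  unfolding successful_def using infinite_super[OF descendants_funpow_mono[of a w x k]] .

lemma funpow_fmap_shift:
  assumes "\<And>m. a m w' = a (m + k) w"
  shows "(fmap a w' ^^ j) m = (fmap a w ^^ j) (m + k) - k"
  by (induction j) (simp_all add: fmap_def assms)

lemma descendants_shift: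
  assumes "\<And>m. a m w' = a (m + k) w"
  shows "descendants a w' x = (\<lambda>m. m - k) ` descendants a w (x + k)"
proof -
  have "m \<in> descendants a w' x \<longleftrightarrow> m + k \<in> descendants a w (x + k)" for m
    unfolding descendants_def funpow_fmap_shift[where a=a, OF assms] by (simp add: diff_eq_eq)
  then show ?thesis by (force simp: image_iff)
qed

lemma successful_shift:
  assumes "\<And>m. a m w' = a (m + k) w"
  shows "successful a w' x \<longleftrightarrow> successful a w (x + k)"
  unfolding successful_def descendants_shift[where a=a, OF assms]
  by (simp add: finite_image_iff inj_on_def)

lemma mem_descendants_if_no_overshoot:
  assumes pos: "\<And>m. 1 \<le> a m w" and below: "\<And>m. m < y \<Longrightarrow> m + a m w \<le> y"
  shows "m \<le> y \<Longrightarrow> m \<in> descendants a w y"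
proof (induction "nat (y - m)" arbitrary: m rule: less_induct)
  case less
  show ?case
  proof (cases "m = y")
    case False
    then have "m + a m w \<in> descendants a w y"
      using less pos[of m] below[of m] by simp
    then obtain j where "(fmap a w ^^ j) (fmap a w m) = y"
      by (auto simp: descendants_def fmap_def)
    then have "(fmap a w ^^ Suc j) m = y" by (simp add: funpow_Suc_right del: funpow.simps)
    then show ?thesis unfolding descendants_def by blast
  qed (simp add: self_in_descendants)
qed

lemma successful_if_no_overshoot:
  assumes pos: "\<And>m. 1 \<le> a m w" and below: "\<And>m. m < y \<Longrightarrow> m + a m w \<le> y"
  shows "successful a w y"
  unfolding successful_iff_unbounded[where a=a, OF pos]
proof
  fix N
  have "min N y - 1 \<in> descendants a w y" by (rule mem_descendants_if_no_overshoot[where a=a, OF pos below]) simp_all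
  then show "\<exists>m\<in>descendants a w y. m < N" by (intro bexI[of _ "min N y - 1"]) simp_all
qed

lemma ephemeral_if_no_landing:
  assumes pos: "\<And>m. 1 \<le> a m w" and miss: "\<And>m. m < x \<Longrightarrow> m + a m w \<noteq> x"
  shows "ephemeral a w x"
proof -
  have "descendants a w x \<subseteq> {x}"
  proof
    fix m assume "m \<in> descendants a w x"
    then obtain j where j: "(fmap a w ^^ j) m = x" by (auto simp: descendants_def)
    show "m \<in> {x}"
    proof (cases j)
      case (Suc i)
      define y where "y = (fmap a w ^^ i) m"
      have "y + a y w = x" using j by (simp add: Suc y_def fmap_def)
      moreover have "y < x" using calculation pos[of y] by simp
      ultimately show ?thesis using miss by blast
    qed (use j in simp)
  qed
  then show ?thesis unfolding ephemeral_def using finite_subset by blast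
qed

lemma ex_switch_to_successful:
  assumes "ephemeral a w x" and "successful a w ((fmap a w ^^ L) x)"
  shows "\<exists>j<L. ephemeral a w ((fmap a w ^^ j) x) \<and> successful a w (fmap a w ((fmap a w ^^ j) x))"
proof -
  obtain j where "j < L" "\<not> successful a w ((fmap a w ^^ j) x)" "successful a w ((fmap a w ^^ Suc j) x)"
    using ex_least_nat_less[of "\<lambda>j. successful a w ((fmap a w ^^ j) x)"] assms
    by (auto simp: ephemeral_iff_not_successful)
  then show ?thesis by (auto simp: ephemeral_iff_not_successful)
qed

text \<open>Jumps in \<open>allowed_jumps L i\<close> for all \<open>i < L\<close> make the sites \<open>0, 1, \<dots>, L\<close> a path of unit
  steps, forbid landing on \<open>0\<close> from the left, and forbid jumping over \<open>L\<close>.\<close>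
definition allowed_jumps :: "nat \<Rightarrow> int \<Rightarrow> int set" where
  "allowed_jumps L i = (if i < 0 then {x. x \<noteq> - i \<and> x < int L - i} else {1})"

lemma ephemeral_zero_successful_funpow:
  assumes pos: "\<And>m. 1 \<le> a m w" and allowed: "\<And>i. i < int L \<Longrightarrow> a i w \<in> allowed_jumps L i"
  shows "ephemeral a w 0 \<and> successful a w ((fmap a w ^^ L) 0)"
proof
  have ones: "a i w = 1" if "0 \<le> i" "i < int L" for i
    using that allowed[of i] by (simp add: allowed_jumps_def)
  have neg: "a i w \<noteq> - i \<and> a i w < int L - i" if "i < 0" for i
    using that allowed[of i] by (simp add: allowed_jumps_def)
  show "ephemeral a w 0"
    using neg by (intro ephemeral_if_no_landing[where a=a, OF pos]) fastforce
  have orbit: "j \<le> L \<Longrightarrow> (fmap a w ^^ j) 0 = int j" for j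
    by (induction j) (simp_all add: fmap_def ones)
  have "m + a m w \<le> int L" if "m < int L" for m
    using that neg[of m] ones[of m] by (cases "m < 0") auto
  then have "successful a w (int L)"
    by (rule successful_if_no_overshoot[where a=a, OF pos])
  then show "successful a w ((fmap a w ^^ L) 0)" using orbit[of L] by simp
qed

section \<open>Mass transport under a stationary flow\<close>

lemma ennreal_one_less_add_divide:
  fixes y d :: ennreal
  assumes "y \<noteq> \<top>" "d \<noteq> \<top>" "0 < d"
  shows "1 < (y + d) / y"
proof (cases "y = 0")
  case False
  obtain r s where "y = ennreal r" "d = ennreal s" "0 < r" "0 < s"
    using assms False by (cases y; cases d) auto
  then show ?thesis by (simp add: divide_ennreal ennreal_less_iff flip: ennreal_plus)
qed (use assms in simp)

lemma ennreal_divide_add_less_one: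
  fixes x d :: ennreal
  assumes "x \<noteq> \<top>" "d \<noteq> \<top>" "0 < d"
  shows "x / (x + d) < 1"
proof -
  obtain r s where "x = ennreal r" "d = ennreal s" "0 \<le> r" "0 < s"
    using assms by (cases x; cases d) auto
  then show ?thesis by (simp add: divide_ennreal ennreal_less_iff flip: ennreal_plus)
qed

locale stationary_jumps = prob_space M for M :: "'a measure" +
  fixes \<theta> :: "int \<Rightarrow> 'a \<Rightarrow> 'a" and a :: "int \<Rightarrow> 'a \<Rightarrow> int"
  assumes theta_meas: "\<And>n. \<theta> n \<in> measurable M M"
    and theta_pres: "\<And>n. distr M M (\<theta> n) = M"
    and theta_add: "\<And>m n w. w \<in> space M \<Longrightarrow> \<theta> (m + n) w = \<theta> m (\<theta> n w)"
    and a_meas: "\<And>n. a n \<in> measurable M (count_space UNIV)"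
    and a_flow: "\<And>n w. w \<in> space M \<Longrightarrow> a n w = a 0 (\<theta> n w)"
    and a_pos: "\<And>n w. w \<in> space M \<Longrightarrow> a n w \<ge> 1"
begin

abbreviation fpow :: "nat \<Rightarrow> 'a \<Rightarrow> int \<Rightarrow> int" where
  "fpow j w \<equiv> fmap a w ^^ j"

lemma theta_in_space: "w \<in> space M \<Longrightarrow> \<theta> k w \<in> space M"
  using measurable_space[OF theta_meas] by blast

lemma a_theta: "w \<in> space M \<Longrightarrow> a m (\<theta> k w) = a (m + k) w"
  using a_flow[of "\<theta> k w" m] a_flow[of w "m + k"] theta_add[of w m k] theta_in_space[of w k]
  by simp

lemma fpow_theta: "w \<in> space M \<Longrightarrow> fpow j (\<theta> k w) m = fpow j w (m + k) - k"
  by (rule funpow_fmap_shift[where a=a]) (rule a_theta)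

lemma successful_theta: "w \<in> space M \<Longrightarrow> successful a (\<theta> k w) x \<longleftrightarrow> successful a w (x + k)"
  by (rule successful_shift[where a=a]) (rule a_theta)

lemma ephemeral_theta: "w \<in> space M \<Longrightarrow> ephemeral a (\<theta> k w) x \<longleftrightarrow> ephemeral a w (x + k)"
  by (simp add: ephemeral_iff_not_successful successful_theta)

lemma emeasure_theta_vimage: "A \<in> sets M \<Longrightarrow> emeasure M (\<theta> k -` A \<inter> space M) = emeasure M A"
  using emeasure_distr[OF theta_meas, of A k] theta_pres[of k] by simp

lemma measurable_fpow: "(\<lambda>w. fpow j w m) \<in> measurable M (count_space UNIV)"
proof (induction j)
  case (Suc j)
  have "(\<lambda>w. (\<lambda>i w. i + a i w) (fpow j w m) w) \<in> measurable M (count_space UNIV)"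
    by (rule measurable_compose_countable'[OF _ Suc]) (auto intro: measurable_compose[OF a_meas])
  then show ?case by (simp only: funpow_fmap_Suc)
qed simp

lemma sets_fpow_eq: "{w \<in> space M. fpow j w m = x} \<in> sets M"
  using measurable_sets[OF measurable_fpow[of j m], of "{x}"] by (simp add: vimage_def Int_def conj_commute)

lemma sets_at_fpow:
  assumes "\<And>x. {w \<in> space M. P w x} \<in> sets M"
  shows "{w \<in> space M. P w (fpow j w m)} \<in> sets M"
proof -
  have "{w \<in> space M. P w (fpow j w m)} = (\<Union>x. {w \<in> space M. fpow j w m = x} \<inter> {w \<in> space M. P w x})"
    by auto
  then show ?thesis using sets_fpow_eq assms by auto
qed

lemma sets_successful: "{w \<in> space M. successful a w x} \<in> sets M"
proof -
  have "{w \<in> space M. successful a w x}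
      = {w \<in> space M. \<forall>N::int. \<exists>m::int. (\<exists>j. fpow j w m = x) \<and> m < N}"
    using successful_iff_unbounded[where a=a, OF a_pos] by (auto simp: descendants_def)
  also have "\<dots> \<in> sets M"
    by (intro sets.sets_Collect_countable_All sets.sets_Collect_countable_Ex sets.sets_Collect_conj)
       (auto intro: sets_fpow_eq)
  finally show ?thesis .
qed

lemma sets_ephemeral: "{w \<in> space M. ephemeral a w x} \<in> sets M"
proof -
  have "{w \<in> space M. ephemeral a w x} = space M - {w \<in> space M. successful a w x}"
    by (auto simp: ephemeral_iff_not_successful)
  then show ?thesis using sets_successful by simp
qed

text \<open>Mass transport: the pairs \<open>(w, m)\<close> with \<open>f\<^sup>j(m) = 0\<close>, shifted by \<open>\<theta> m\<close>, are the pairs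
  with \<open>f\<^sup>j(0) = -m\<close>, so counting them in two ways moves the event \<open>Q\<close> from the
  root \<open>0\<close> to its ancestor \<open>f\<^sup>j(0)\<close>.\<close>
lemma nn_integral_dcount:
  assumes shift: "\<And>w k x. w \<in> space M \<Longrightarrow> Q (\<theta> k w) x = Q w (x + k)"
    and meas: "\<And>x. {w \<in> space M. Q w x} \<in> sets M"
  shows "(\<integral>\<^sup>+w\<in>{w \<in> space M. Q w 0}. dcount a j w 0 \<partial>M) = emeasure M {w \<in> space M. Q w (fpow j w 0)}"
proof -
  define B where "B m = {w \<in> space M. fpow j w 0 = - m \<and> Q w (- m)}" for m
  define C where "C m = {w \<in> space M. fpow j w m = 0 \<and> Q w 0}" for m
  have B_sets: "B m \<in> sets M" for m
  proof -
    have "B m = {w \<in> space M. fpow j w 0 = - m} \<inter> {w \<in> space M. Q w (- m)}" by (auto simp: B_def)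
    then show ?thesis using sets_fpow_eq meas by simp
  qed
  have C_sets: "C m \<in> sets M" for m
  proof -
    have "C m = {w \<in> space M. fpow j w m = 0} \<inter> {w \<in> space M. Q w 0}" by (auto simp: C_def)
    then show ?thesis using sets_fpow_eq meas by simp
  qed
  have C_eq: "C m = \<theta> m -` B m \<inter> space M" for m
    using theta_in_space fpow_theta shift by (auto simp: B_def C_def)
  have "(\<integral>\<^sup>+w\<in>{w \<in> space M. Q w 0}. dcount a j w 0 \<partial>M)
      = (\<integral>\<^sup>+w. \<integral>\<^sup>+m. indicator (C m) w \<partial>count_space UNIV \<partial>M)"
  proof (rule nn_integral_cong)
    fix w assume w: "w \<in> space M"
    have "dcount a j w 0 * indicator {w \<in> space M. Q w 0} w
        = (\<integral>\<^sup>+m. indicator {m. fpow j w m = 0} m * indicator {w \<in> space M. Q w 0} w \<partial>count_space UNIV)"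
      by (simp add: dcount_def nn_integral_multc)
    also have "\<dots> = (\<integral>\<^sup>+m. indicator (C m) w \<partial>count_space UNIV)"
      using w by (intro nn_integral_cong) (auto simp: C_def indicator_def)
    finally show "dcount a j w 0 * indicator {w \<in> space M. Q w 0} w
        = (\<integral>\<^sup>+m. indicator (C m) w \<partial>count_space UNIV)" .
  qed
  also have "\<dots> = (\<integral>\<^sup>+m. emeasure M (C m) \<partial>count_space UNIV)"
    using C_sets by (subst nn_integral_count_space_nn_integral) auto
  also have "\<dots> = (\<integral>\<^sup>+m. emeasure M (B m) \<partial>count_space UNIV)"
    using B_sets by (simp add: C_eq emeasure_theta_vimage)
  also have "\<dots> = (\<integral>\<^sup>+w. \<integral>\<^sup>+m. indicator (B m) w \<partial>count_space UNIV \<partial>M)"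
    using B_sets by (subst nn_integral_count_space_nn_integral) auto
  also have "\<dots> = (\<integral>\<^sup>+w. indicator {w \<in> space M. Q w (fpow j w 0)} w \<partial>M)"
  proof (rule nn_integral_cong)
    fix w assume w: "w \<in> space M"
    have "(\<integral>\<^sup>+m. indicator (B m) w \<partial>count_space UNIV)
        = (\<integral>\<^sup>+m. indicator {- fpow j w 0} m * indicator {w \<in> space M. Q w (fpow j w 0)} w \<partial>count_space UNIV)"
      using w by (intro nn_integral_cong) (auto simp: B_def indicator_def)
    then show "(\<integral>\<^sup>+m. indicator (B m) w \<partial>count_space UNIV) = indicator {w \<in> space M. Q w (fpow j w 0)} w"
      by (simp add: nn_integral_multc)
  qed
  also have "\<dots> = emeasure M {w \<in> space M. Q w (fpow j w 0)}"
    using sets_at_fpow[OF meas] by simp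
  finally show ?thesis .
qed

definition becomes_successful :: "nat \<Rightarrow> 'a set" where
  "becomes_successful n = {w \<in> space M. ephemeral a w 0 \<and> successful a w (fpow n w 0)}"

lemma sets_becomes_successful: "becomes_successful n \<in> sets M"
proof -
  have "becomes_successful n
      = {w \<in> space M. ephemeral a w 0} \<inter> {w \<in> space M. successful a w (fpow n w 0)}"
    by (auto simp: becomes_successful_def)
  then show ?thesis using sets_ephemeral sets_at_fpow[OF sets_successful] by simp
qed

lemma becomes_successful_mono:
  assumes "j \<le> n"
  shows "becomes_successful j \<subseteq> becomes_successful n"
proof
  fix w assume "w \<in> becomes_successful j"
  moreover have "fpow n w 0 = fpow (n - j) w (fpow j w 0)"
    by (metis assms comp_apply funpow_add le_add_diff_inverse2)
  ultimately show "w \<in> becomes_successful n"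
    using successful_funpow[of a w "fpow j w 0" "n - j"] by (simp add: becomes_successful_def)
qed

lemma nn_integral_dcount_successful:
  "(\<integral>\<^sup>+w\<in>{w \<in> space M. successful a w 0}. dcount a n w 0 \<partial>M)
     = emeasure M {w \<in> space M. successful a w 0} + emeasure M (becomes_successful n)"
proof -
  have "{w \<in> space M. successful a w (fpow n w 0)}
      = {w \<in> space M. successful a w 0} \<union> becomes_successful n"
    using successful_funpow[of a _ 0 n] by (auto simp: becomes_successful_def ephemeral_iff_not_successful)
  moreover have "{w \<in> space M. successful a w 0} \<inter> becomes_successful n = {}"
    by (auto simp: becomes_successful_def ephemeral_iff_not_successful)
  ultimately show ?thesis
    using sets_successful sets_becomes_successful
    by (subst nn_integral_dcount) (auto simp: successful_theta plus_emeasure)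
qed

lemma emeasure_ephemeral_eq:
  "emeasure M {w \<in> space M. ephemeral a w 0}
     = (\<integral>\<^sup>+w\<in>{w \<in> space M. ephemeral a w 0}. dcount a n w 0 \<partial>M) + emeasure M (becomes_successful n)"
proof -
  have "{w \<in> space M. ephemeral a w 0}
      = {w \<in> space M. ephemeral a w (fpow n w 0)} \<union> becomes_successful n"
    using successful_funpow[of a _ 0 n] by (auto simp: becomes_successful_def ephemeral_iff_not_successful)
  moreover have "{w \<in> space M. ephemeral a w (fpow n w 0)} \<inter> becomes_successful n = {}"
    by (auto simp: becomes_successful_def ephemeral_iff_not_successful)
  ultimately show ?thesis
    using sets_at_fpow[OF sets_ephemeral] sets_becomes_successful
    by (subst nn_integral_dcount) (auto simp: ephemeral_theta sets_ephemeral plus_emeasure)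
qed

lemma cond_exp_dcount_bounds:
  assumes pos: "0 < emeasure M (becomes_successful 1)" and n: "1 \<le> n"
  shows "cond_exp_given M {w \<in> space M. successful a w 0} (\<lambda>w. dcount a n w 0) > 1
       \<and> cond_exp_given M {w \<in> space M. ephemeral a w 0} (\<lambda>w. dcount a n w 0) < 1"
proof
  have "emeasure M (becomes_successful 1) \<le> emeasure M (becomes_successful n)"
    using n sets_becomes_successful by (intro emeasure_mono becomes_successful_mono)
  with pos have pos_n: "0 < emeasure M (becomes_successful n)" by simp
  then show "cond_exp_given M {w \<in> space M. successful a w 0} (\<lambda>w. dcount a n w 0) > 1"
    unfolding cond_exp_given_def nn_integral_dcount_successful
    by (intro ennreal_one_less_add_divide) (simp_all add: emeasure_finite)
  let ?I = "\<integral>\<^sup>+w\<in>{w \<in> space M. ephemeral a w 0}. dcount a n w 0 \<partial>M"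
  have "?I \<le> emeasure M {w \<in> space M. ephemeral a w 0}"
    unfolding emeasure_ephemeral_eq[of n] by simp
  then have "?I \<noteq> \<top>" using emeasure_finite top_unique by metis
  then show "cond_exp_given M {w \<in> space M. ephemeral a w 0} (\<lambda>w. dcount a n w 0) < 1"
    using pos_n unfolding cond_exp_given_def emeasure_ephemeral_eq[of n]
    by (intro ennreal_divide_add_less_one) (simp_all add: emeasure_finite)
qed

lemma emeasure_becomes_successful_one_pos:
  assumes "0 < emeasure M (becomes_successful L)"
  shows "0 < emeasure M (becomes_successful 1)"
proof -
  define Q where "Q w x \<longleftrightarrow> ephemeral a w x \<and> successful a w (fmap a w x)" for w x
  define B where "B j = {w \<in> space M. Q w (fpow j w 0)}" for j
  have Q_theta: "Q (\<theta> k w) x = Q w (x + k)" if "w \<in> space M" for w k x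
  proof -
    have "fmap a (\<theta> k w) x = fmap a w (x + k) - k" using that by (simp add: fmap_def a_theta)
    then show ?thesis unfolding Q_def using that by (simp add: ephemeral_theta successful_theta)
  qed
  have Q_sets: "{w \<in> space M. Q w x} \<in> sets M" for x
  proof -
    have "{w \<in> space M. Q w x} = {w \<in> space M. ephemeral a w x} \<inter> {w \<in> space M. successful a w (fpow 1 w x)}"
      by (auto simp: Q_def)
    then show ?thesis
      using sets_ephemeral sets_at_fpow[where P="\<lambda>w x. successful a w x", OF sets_successful, of 1 x] by simp
  qed
  have B_sets: "B j \<in> sets M" for j
    unfolding B_def by (rule sets_at_fpow[OF Q_sets])
  have "becomes_successful L \<subseteq> (\<Union>j<L. B j)"
    using ex_switch_to_successful[of a] by (fastforce simp: becomes_successful_def B_def Q_def)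
  then have "emeasure M (becomes_successful L) \<le> emeasure M (\<Union>j<L. B j)"
    using B_sets by (intro emeasure_mono) auto
  also have "\<dots> \<le> (\<Sum>j<L. emeasure M (B j))"
    using B_sets by (intro emeasure_subadditive_finite) auto
  finally have "0 < (\<Sum>j<L. emeasure M (B j))"
    by (rule order.strict_trans2[OF assms])
  then obtain j where "0 < emeasure M (B j)"
    by (metis not_gr_zero sum.neutral)
  then have "0 < (\<integral>\<^sup>+w\<in>{w \<in> space M. Q w 0}. dcount a j w 0 \<partial>M)"
    unfolding B_def by (subst nn_integral_dcount[OF Q_theta Q_sets])
  then have "emeasure M {w \<in> space M. Q w 0} \<noteq> 0"
    using nn_integral_null_set[of "{w \<in> space M. Q w 0}" M] Q_sets by (auto simp: null_sets_def)
  moreover have "{w \<in> space M. Q w 0} = becomes_successful 1"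
    by (simp add: Q_def becomes_successful_def)
  ultimately show ?thesis by (simp add: zero_less_iff_neq_zero)
qed

end

section \<open>I.i.d. jumps: a branching event of positive probability\<close>

lemma (in prob_space) prob_all_ge_one_minus_sum:
  assumes "finite I" and "\<And>i. i \<in> I \<Longrightarrow> {w \<in> space M. P i w} \<in> events"
  shows "1 - (\<Sum>i\<in>I. prob {w \<in> space M. \<not> P i w}) \<le> prob {w \<in> space M. \<forall>i\<in>I. P i w}"
proof -
  have compl: "{w \<in> space M. \<not> P i w} = space M - {w \<in> space M. P i w}" for i by auto
  have "prob (space M - {w \<in> space M. \<forall>i\<in>I. P i w}) = prob (\<Union>i\<in>I. {w \<in> space M. \<not> P i w})"
    by (rule arg_cong[where f=prob]) auto
  also have "\<dots> \<le> (\<Sum>i\<in>I. prob {w \<in> space M. \<not> P i w})"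
    using assms by (intro finite_measure_subadditive_finite) (auto simp: compl)
  finally show ?thesis
    using assms by (subst (asm) prob_compl) (auto intro: sets.sets_Collect_finite_All)
qed

lemma (in prob_space) prob_INT_decseq_ge:
  assumes "\<And>K. A K \<in> events" and "decseq A" and "\<And>K. c \<le> prob (A K)"
  shows "c \<le> prob (\<Inter>K. A K)"
  using assms by (intro LIMSEQ_le_const[OF finite_Lim_measure_decseq]) auto

locale iid_jumps = stationary_jumps +
  assumes a_indep: "indep_vars (\<lambda>_. count_space UNIV) a UNIV"
    and a_ident: "\<And>n. distr M (count_space UNIV) (a n) = distr M (count_space UNIV) (a 0)"
    and a_int: "integrable M (\<lambda>w. real_of_int (a 0 w))"
    and p1_pos: "0 < prob {w \<in> space M. a 0 w = 1}"
    and p1_lt: "prob {w \<in> space M. a 0 w = 1} < 1"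
begin

abbreviation p1 :: real where
  "p1 \<equiv> prob {w \<in> space M. a 0 w = 1}"

lemma sets_a: "{w \<in> space M. P (a i w)} \<in> sets M"
  using measurable_sets[OF a_meas[of i], of "{x. P x}"] by (simp add: vimage_def Int_def conj_commute)

lemma prob_a_eq: "prob {w \<in> space M. P (a i w)} = prob {w \<in> space M. P (a 0 w)}"
  using measure_distr[OF a_meas[of i], of "{x. P x}"] measure_distr[OF a_meas[of 0], of "{x. P x}"] a_ident[of i]
  by (simp add: vimage_def Int_def conj_commute)

lemma prob_all_a_in_eq_prod:
  assumes "finite I"
  shows "prob {w \<in> space M. \<forall>i\<in>I. a i w \<in> C i} = (\<Prod>i\<in>I. prob {w \<in> space M. a 0 w \<in> C i})"
proof (cases "I = {}")
  case False
  have "indep_sets (\<lambda>i. {a i -` A \<inter> space M | A. A \<in> sets (count_space UNIV)}) UNIV"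
    using a_indep by (simp add: indep_vars_def2)
  then have "prob (\<Inter>i\<in>I. a i -` C i \<inter> space M) = (\<Prod>i\<in>I. prob (a i -` C i \<inter> space M))"
    using assms False by (intro indep_setsD) auto
  moreover have "(\<Inter>i\<in>I. a i -` C i \<inter> space M) = {w \<in> space M. \<forall>i\<in>I. a i w \<in> C i}"
    using False by auto
  moreover have "a i -` C i \<inter> space M = {w \<in> space M. a i w \<in> C i}" for i
    by auto
  moreover have "prob {w \<in> space M. a i w \<in> C i} = prob {w \<in> space M. a 0 w \<in> C i}" for i
    by (rule prob_a_eq)
  ultimately show ?thesis by simp
qed (simp add: prob_space)

lemma summable_prob_a_ge: "summable (\<lambda>s::nat. prob {w \<in> space M. int s \<le> a 0 w})"
proof (rule summableI_nonneg_bounded)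
  fix n
  have count: "(\<Sum>s<n. if int s \<le> x then 1 else 0) = real (min n (nat x + 1))" if "0 \<le> x" for x
    using that by (induction n) auto
  have ind: "integrable M (indicator {w \<in> space M. int s \<le> a 0 w} :: 'a \<Rightarrow> real)" for s
    by (intro integrable_real_indicator sets_a) (simp add: less_top[symmetric])
  have "(\<Sum>s<n. prob {w \<in> space M. int s \<le> a 0 w})
      = integral\<^sup>L M (\<lambda>w. \<Sum>s<n. indicator {w \<in> space M. int s \<le> a 0 w} w)"
    using ind by (simp add: Bochner_Integration.integral_sum Int_absorb2)
  also have "\<dots> \<le> integral\<^sup>L M (\<lambda>w. real_of_int (a 0 w) + 1)"
  proof (rule integral_mono)
    fix w assume w: "w \<in> space M"
    have "(\<Sum>s<n. indicator {w \<in> space M. int s \<le> a 0 w} w :: real) = (\<Sum>s<n. if int s \<le> a 0 w then 1 else 0)"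
      using w by (intro sum.cong) (auto simp: indicator_def)
    then show "(\<Sum>s<n. indicator {w \<in> space M. int s \<le> a 0 w} w) \<le> real_of_int (a 0 w) + 1"
      using a_pos[OF w, of 0] count[of "a 0 w"] by simp
  qed (use ind a_int in auto)
  finally show "(\<Sum>s<n. prob {w \<in> space M. int s \<le> a 0 w}) \<le> integral\<^sup>L M (\<lambda>w. real_of_int (a 0 w) + 1)" .
qed simp

lemma exists_tail_cutoff:
  obtains L :: nat and \<tau> :: real where "\<tau> < p1" and "\<tau> < 1 - p1"
    and "\<And>I. finite I \<Longrightarrow> I \<subseteq> {..<0} \<Longrightarrow> (\<Sum>i\<in>I. prob {w \<in> space M. int L - i \<le> a 0 w}) \<le> \<tau>"
proof -
  define f where "f s = prob {w \<in> space M. int s \<le> a 0 w}" for s :: nat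
  have "summable f" unfolding f_def by (rule summable_prob_a_ge)
  moreover have "0 < min p1 (1 - p1)" using p1_pos p1_lt by simp
  ultimately obtain L where L: "norm (\<Sum>s. f (s + L)) < min p1 (1 - p1)"
    using suminf_exist_split by blast
  have summable_L: "summable (\<lambda>s. f (s + L))"
    using \<open>summable f\<close> by (rule summable_ignore_initial_segment)
  have "(\<Sum>i\<in>I. prob {w \<in> space M. int L - i \<le> a 0 w}) \<le> (\<Sum>s. f (s + L))"
    if I: "finite I" "I \<subseteq> {..<0}" for I
  proof -
    have "int (nat (- i) + L) = int L - i" if "i \<in> I" for i
      using that I by auto
    then have "(\<Sum>i\<in>I. prob {w \<in> space M. int L - i \<le> a 0 w}) = (\<Sum>i\<in>I. f (nat (- i) + L))"
      unfolding f_def by (intro sum.cong) simp_all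
    also have "\<dots> = (\<Sum>s\<in>(\<lambda>i. nat (- i)) ` I. f (s + L))"
    proof -
      have "inj_on (\<lambda>i. nat (- i)) I" using I by (auto simp: inj_on_def)
      then show ?thesis by (simp add: sum.reindex)
    qed
    also have "\<dots> \<le> (\<Sum>s. f (s + L))"
      using I(1) by (intro sum_le_suminf[OF summable_L]) (simp_all add: f_def)
    finally show ?thesis .
  qed
  moreover have "(\<Sum>s. f (s + L)) < p1" "(\<Sum>s. f (s + L)) < 1 - p1"
    using L abs_ge_self[of "\<Sum>s. f (s + L)"] by simp_all
  ultimately show ?thesis using that by blast
qed

lemma prob_not_allowed_le:
  assumes "i < 0"
  shows "prob {w \<in> space M. a 0 w \<notin> allowed_jumps L i}
    \<le> prob {w \<in> space M. a 0 w = - i} + prob {w \<in> space M. int L - i \<le> a 0 w}"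
proof -
  have "prob {w \<in> space M. a 0 w \<notin> allowed_jumps L i}
      \<le> prob ({w \<in> space M. a 0 w = - i} \<union> {w \<in> space M. int L - i \<le> a 0 w})"
    using assms by (intro finite_measure_mono sets.Un sets_a) (auto simp: allowed_jumps_def)
  also have "\<dots> \<le> prob {w \<in> space M. a 0 w = - i} + prob {w \<in> space M. int L - i \<le> a 0 w}"
    by (rule measure_subadditive) (auto intro: sets_a)
  finally show ?thesis .
qed

context
  fixes L :: nat and \<tau> :: real
  assumes tau_lt_p1: "\<tau> < p1" and tau_lt_compl: "\<tau> < 1 - p1"
    and tail: "\<And>I. finite I \<Longrightarrow> I \<subseteq> {..<0} \<Longrightarrow> (\<Sum>i\<in>I. prob {w \<in> space M. int L - i \<le> a 0 w}) \<le> \<tau>"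
begin

lemma prob_allowed_left_ge:
  assumes I: "finite I" "I \<subseteq> {..-2}"
  shows "p1 - \<tau> \<le> prob {w \<in> space M. \<forall>i\<in>I. a i w \<in> allowed_jumps L i}"
proof -
  have "(\<Sum>i\<in>I. prob {w \<in> space M. a 0 w = - i}) = prob (\<Union>i\<in>I. {w \<in> space M. a 0 w = - i})"
    using I(1) by (intro finite_measure_finite_Union[symmetric]) (auto intro: sets_a simp: disjoint_family_on_def)
  also have "\<dots> \<le> prob (space M - {w \<in> space M. a 0 w = 1})"
    using I(2) by (intro finite_measure_mono) (auto intro: sets_a)
  also have "\<dots> = 1 - p1" by (rule prob_compl[OF sets_a])
  finally have hits: "(\<Sum>i\<in>I. prob {w \<in> space M. a 0 w = - i}) \<le> 1 - p1" .
  have "(\<Sum>i\<in>I. prob {w \<in> space M. a i w \<notin> allowed_jumps L i})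
      = (\<Sum>i\<in>I. prob {w \<in> space M. a 0 w \<notin> allowed_jumps L i})"
    by (intro sum.cong refl prob_a_eq)
  also have "\<dots> \<le> (\<Sum>i\<in>I. prob {w \<in> space M. a 0 w = - i} + prob {w \<in> space M. int L - i \<le> a 0 w})"
    using I(2) by (intro sum_mono prob_not_allowed_le) auto
  also have "\<dots> \<le> (1 - p1) + \<tau>"
    using hits tail[OF I(1)] I(2) by (force simp: sum.distrib)
  finally have "(\<Sum>i\<in>I. prob {w \<in> space M. a i w \<notin> allowed_jumps L i}) \<le> 1 - p1 + \<tau>" .
  moreover have "1 - (\<Sum>i\<in>I. prob {w \<in> space M. a i w \<notin> allowed_jumps L i})
      \<le> prob {w \<in> space M. \<forall>i\<in>I. a i w \<in> allowed_jumps L i}"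
    using I(1) by (intro prob_all_ge_one_minus_sum sets_a)
  ultimately show ?thesis by linarith
qed

lemma prob_allowed_minus_one_ge: "1 - p1 - \<tau> \<le> prob {w \<in> space M. a 0 w \<in> allowed_jumps L (-1)}"
proof -
  have "space M - {w \<in> space M. a 0 w \<in> allowed_jumps L (-1)} = {w \<in> space M. a 0 w \<notin> allowed_jumps L (-1)}"
    by auto
  then have "1 - prob {w \<in> space M. a 0 w \<in> allowed_jumps L (-1)} = prob {w \<in> space M. a 0 w \<notin> allowed_jumps L (-1)}"
    using prob_compl[OF sets_a[of "\<lambda>x. x \<in> allowed_jumps L (-1)" 0]] by simp
  also have "\<dots> \<le> p1 + prob {w \<in> space M. int L + 1 \<le> a 0 w}"
    using prob_not_allowed_le[of "-1" L] by simp
  also have "prob {w \<in> space M. int L + 1 \<le> a 0 w} \<le> \<tau>"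
    using tail[of "{-1}"] by simp
  finally show ?thesis by simp
qed

lemma prob_allowed_interval_ge:
  "(p1 - \<tau>) * ((1 - p1 - \<tau>) * p1 ^ L)
     \<le> prob {w \<in> space M. \<forall>i\<in>{- int K - 1..<int L}. a i w \<in> allowed_jumps L i}"
proof -
  let ?P = "\<lambda>i. prob {w \<in> space M. a 0 w \<in> allowed_jumps L i}"
  have split: "{- int K - 1..<int L} = {- int K - 1..-2} \<union> insert (-1) {0..<int L}"
    by auto
  have "prob {w \<in> space M. \<forall>i\<in>{- int K - 1..<int L}. a i w \<in> allowed_jumps L i}
      = (\<Prod>i\<in>{- int K - 1..<int L}. ?P i)"
    by (rule prob_all_a_in_eq_prod) simp
  also have "\<dots> = (\<Prod>i\<in>{- int K - 1..-2}. ?P i) * (?P (-1) * p1 ^ L)"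
    unfolding split by (subst prod.union_disjoint) (auto simp: allowed_jumps_def)
  also have "(\<Prod>i\<in>{- int K - 1..-2}. ?P i)
      = prob {w \<in> space M. \<forall>i\<in>{- int K - 1..-2}. a i w \<in> allowed_jumps L i}"
    by (rule prob_all_a_in_eq_prod[symmetric]) simp
  finally show ?thesis
    using prob_allowed_left_ge[of "{- int K - 1..-2}"] prob_allowed_minus_one_ge tau_lt_p1 tau_lt_compl
    by (auto intro!: mult_mono)
qed

lemma prob_allowed_pos: "0 < prob {w \<in> space M. \<forall>i<int L. a i w \<in> allowed_jumps L i}"
proof -
  define G where "G K = {w \<in> space M. \<forall>i\<in>{- int K - 1..<int L}. a i w \<in> allowed_jumps L i}" for K :: nat
  have "0 < (p1 - \<tau>) * ((1 - p1 - \<tau>) * p1 ^ L)"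
    using tau_lt_p1 tau_lt_compl p1_pos by simp
  also have "\<dots> \<le> prob (\<Inter>K. G K)"
  proof (rule prob_INT_decseq_ge)
    show "G K \<in> events" for K
      unfolding G_def by (intro sets.sets_Collect_finite_All sets_a) simp
    show "decseq G"
      unfolding decseq_def G_def by auto
  qed (unfold G_def, rule prob_allowed_interval_ge)
  also have "\<dots> \<le> prob {w \<in> space M. \<forall>i<int L. a i w \<in> allowed_jumps L i}"
  proof (rule finite_measure_mono)
    show "(\<Inter>K. G K) \<subseteq> {w \<in> space M. \<forall>i<int L. a i w \<in> allowed_jumps L i}"
    proof safe
      fix w assume w: "w \<in> (\<Inter>K. G K)"
      then show "w \<in> space M" by (auto simp: G_def)
      fix i assume "i < int L"
      then have "i \<in> {- int (nat (- i)) - 1..<int L}" by simp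
      then show "a i w \<in> allowed_jumps L i" using w unfolding G_def by blast
    qed
    show "{w \<in> space M. \<forall>i<int L. a i w \<in> allowed_jumps L i} \<in> events"
      by (intro sets.sets_Collect_countable_All sets.sets_Collect_imp sets.sets_Collect_const sets_a)
  qed
  finally show ?thesis .
qed

end

lemma emeasure_becomes_successful_pos: "0 < emeasure M (becomes_successful 1)"
proof -
  obtain \<tau> and L :: nat where "\<tau> < p1" "\<tau> < 1 - p1"
    and "\<And>I. finite I \<Longrightarrow> I \<subseteq> {..<0} \<Longrightarrow> (\<Sum>i\<in>I. prob {w \<in> space M. int L - i \<le> a 0 w}) \<le> \<tau>"
    using exists_tail_cutoff by blast
  then have L: "0 < prob {w \<in> space M. \<forall>i<int L. a i w \<in> allowed_jumps L i}"
    by (rule prob_allowed_pos)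
  have "{w \<in> space M. \<forall>i<int L. a i w \<in> allowed_jumps L i} \<subseteq> becomes_successful L"
  proof
    fix w assume w: "w \<in> {w \<in> space M. \<forall>i<int L. a i w \<in> allowed_jumps L i}"
    have "ephemeral a w 0 \<and> successful a w (fpow L w 0)"
      using w a_pos by (intro ephemeral_zero_successful_funpow[where a=a]) auto
    then show "w \<in> becomes_successful L" using w by (simp add: becomes_successful_def)
  qed
  then have "prob {w \<in> space M. \<forall>i<int L. a i w \<in> allowed_jumps L i} \<le> prob (becomes_successful L)"
    using sets_becomes_successful by (rule finite_measure_mono)
  then have "0 < emeasure M (becomes_successful L)"
    using L by (simp add: emeasure_eq_measure)
  then show ?thesis by (rule emeasure_becomes_successful_one_pos)
qed

end

theorem mainTheorem9:
  fixes M :: "'a measure" and \<theta> :: "int \<Rightarrow> 'a \<Rightarrow> 'a" and a :: "int \<Rightarrow> 'a \<Rightarrow> int"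
  assumes "prob_space M"
    and theta_meas: "\<And>n. \<theta> n \<in> measurable M M"
    and theta_pres: "\<And>n. distr M M (\<theta> n) = M"
    and theta_bij: "\<And>n. bij_betw (\<theta> n) (space M) (space M)"
    and theta_0: "\<And>w. w \<in> space M \<Longrightarrow> \<theta> 0 w = w"
    and theta_add: "\<And>m n w. w \<in> space M \<Longrightarrow> \<theta> (m + n) w = \<theta> m (\<theta> n w)"
    and a_meas: "\<And>n. a n \<in> measurable M (count_space UNIV)"
    and a_flow: "\<And>n w. w \<in> space M \<Longrightarrow> a n w = a 0 (\<theta> n w)"
    and a_indep: "prob_space.indep_vars M (\<lambda>_. count_space UNIV) a UNIV"
    and a_ident: "\<And>n. distr M (count_space UNIV) (a n) = distr M (count_space UNIV) (a 0)"
    and a_pos: "\<And>n w. w \<in> space M \<Longrightarrow> a n w \<ge> 1"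
    and a_int: "integrable M (\<lambda>w. real_of_int (a 0 w))"
    and p1_pos: "0 < measure M {w \<in> space M. a 0 w = 1}"
    and p1_lt: "measure M {w \<in> space M. a 0 w = 1} < 1"
    and n_pos: "n \<ge> 1"
  shows "cond_exp_given M {w \<in> space M. successful a w 0} (\<lambda>w. dcount a n w 0) > 1
       \<and> cond_exp_given M {w \<in> space M. ephemeral a w 0} (\<lambda>w. dcount a n w 0) < 1"
proof -
  interpret iid_jumps M \<theta> a
    using assms unfolding iid_jumps_def iid_jumps_axioms_def stationary_jumps_def stationary_jumps_axioms_def
    by blast
  show ?thesis
    using emeasure_becomes_successful_pos n_pos by (rule cond_exp_dcount_bounds)
qed

end
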